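(* Assume $M$ has genus zero. Then the law of $\omega$ under $\mathbf P$ stochastically dominates the $\mathrm{FK}(q)$ random cluster model on $\mathsf G$ with parameter $p=1-b$ and free boundary conditions (the measure on $\xi\subseteq\mathsf E$ proportional to $q^{k(\xi)}p^{|\xi|}(1-p)^{|\mathsf E\setminus\xi|}$). Analogously, the law of $\omega'$ stochastically dominates the $\mathrm{FK}(q')$ random cluster model on $\mathsf G^*$ with parameter $1-a$.
   Context: $M$ is the sphere or the plane. Let $\mathsf G=(\mathsf V,\mathsf E)$ be a finite connected graph embedded in $M$ with all faces topological discs, and $\mathsf G^*=(\mathsf U,\mathsf E^* )$ its embedded dual ($\mathsf U$ = faces of $\mathsf G$); $e^*$ is the dual edge crossing $e$, $\xi^*=\{e^*:e\in\xi\}$. Fix integers $q,q'\ge1$, finite $Q,Q'\subset\mathbb C$ with $Q=-Q$, $Q'=-Q'$, $|Q|=q$, $|Q'|=q'$, and $a,b\in(0,1]$. For $\sigma:\mathsf V\to Q$, $\eta(\sigma)\subseteq\mathsf E^*$ is the set of $e^*$ whose primal $e$ has endpoints with different $\sigma$-values; for $\sigma':\mathsf U\to Q'$, $\eta(\sigma')\subseteq\mathsf E$ is the set of $e$ whose dual $e^*$ has endpoints with different $\sigma'$-values. $\mathbf P(\sigma,\sigma')\propto a^{|\eta(\sigma')|}b^{|\eta(\sigma)|}$ on $\Sigma=\{(\sigma,\sigma'):\eta(\sigma)^*\cap\eta(\sigma')=\emptyset\}$. Percolation: given $(\sigma,\sigma')$, every edge of $\eta(\sigma')$ and every dual edge of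 $\eta(\sigma)$ is open; for each pair $(e,e^* )$ with $e\notin\eta(\sigma')$, $e^*\notin\eta(\sigma)$, independently: if $a+b\le1$, ($e$ open, $e^*$ closed) w.p. $a$, ($e$ closed, $e^*$ open) w.p. $b$, both open w.p. $1-a-b$; if $a+b\ge1$, ($e$ open, $e^*$ closed) w.p. $1-b$, ($e$ closed, $e^*$ open) w.p. $1-a$, both closed w.p. $a+b-1$. $\omega$, $\omega'$ are the sets of open primal and dual edges. $k(\xi)$ is the number of connected components of $(\mathsf V,\xi)$ (for dual configurations, of $(\mathsf U,\xi)$), isolated vertices included. Stochastic domination is with respect to inclusion of edge sets. *)

theory Defs
  imports Complex_Main "HOL-Library.FuncSet"
begin

text \<open>A map is given by a finite set of darts D, a fixed-point-free involution alpha
  (the two half-edges of an edge) and a permutation rho (rotation around vertices).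
  The faces on the two sides of the edge {d, alpha d} are the faces containing d and alpha d.\<close>

definition orb :: "('d \<Rightarrow> 'd) \<Rightarrow> 'd \<Rightarrow> 'd set" where
  "orb f x = {(f ^^ n) x | n. True}"

definition is_cmap :: "'d set \<Rightarrow> ('d \<Rightarrow> 'd) \<Rightarrow> ('d \<Rightarrow> 'd) \<Rightarrow> bool" where
  "is_cmap D alpha rho \<longleftrightarrow> finite D \<and> bij_betw rho D D \<and>
     (\<forall>d\<in>D. alpha d \<in> D \<and> alpha d \<noteq> d \<and> alpha (alpha d) = d)"

definition cm_verts :: "'d set \<Rightarrow> ('d \<Rightarrow> 'd) \<Rightarrow> 'd set set" where
  "cm_verts D rho = {orb rho d | d. d \<in> D}"

definition cm_edges :: "'d set \<Rightarrow> ('d \<Rightarrow> 'd) \<Rightarrow> 'd set set" where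
  "cm_edges D alpha = {orb alpha d | d. d \<in> D}"

definition cm_faces :: "'d set \<Rightarrow> ('d \<Rightarrow> 'd) \<Rightarrow> ('d \<Rightarrow> 'd) \<Rightarrow> 'd set set" where
  "cm_faces D alpha rho = {orb (rho \<circ> alpha) d | d. d \<in> D}"

definition cm_ends :: "('d \<Rightarrow> 'd) \<Rightarrow> 'd set \<Rightarrow> 'd set set" where
  "cm_ends rho e = {orb rho d | d. d \<in> e}"

definition cm_dends :: "('d \<Rightarrow> 'd) \<Rightarrow> ('d \<Rightarrow> 'd) \<Rightarrow> 'd set \<Rightarrow> 'd set set" where
  "cm_dends alpha rho e = {orb (rho \<circ> alpha) d | d. d \<in> e}"

definition cm_connected :: "'d set \<Rightarrow> ('d \<Rightarrow> 'd) \<Rightarrow> ('d \<Rightarrow> 'd) \<Rightarrow> bool" where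
  "cm_connected D alpha rho \<longleftrightarrow>
     (\<forall>d\<in>D. \<forall>d'\<in>D. (d, d') \<in> ({(x, rho x) | x. x \<in> D} \<union> {(x, alpha x) | x. x \<in> D})\<^sup>*)"

definition cm_genus0 :: "'d set \<Rightarrow> ('d \<Rightarrow> 'd) \<Rightarrow> ('d \<Rightarrow> 'd) \<Rightarrow> bool" where
  "cm_genus0 D alpha rho \<longleftrightarrow> is_cmap D alpha rho \<and> cm_connected D alpha rho \<and>
     int (card (cm_verts D rho)) - int (card (cm_edges D alpha)) + int (card (cm_faces D alpha rho)) = 2"

definition n_comps :: "'v set \<Rightarrow> ('e \<Rightarrow> 'v set) \<Rightarrow> 'e set \<Rightarrow> nat" where
  "n_comps Vs ends xi =
     card (Vs // (({(x, y). \<exists>e\<in>xi. x \<in> ends e \<and> y \<in> ends e})\<^sup>* \<inter> (Vs \<times> Vs)))"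

definition fk_weight :: "'v set \<Rightarrow> 'e set \<Rightarrow> ('e \<Rightarrow> 'v set) \<Rightarrow> real \<Rightarrow> real \<Rightarrow> 'e set \<Rightarrow> real" where
  "fk_weight Vs E ends q p xi = q ^ n_comps Vs ends xi * p ^ card xi * (1 - p) ^ card (E - xi)"

definition fk :: "'v set \<Rightarrow> 'e set \<Rightarrow> ('e \<Rightarrow> 'v set) \<Rightarrow> real \<Rightarrow> real \<Rightarrow> 'e set \<Rightarrow> real" where
  "fk Vs E ends q p xi =
     fk_weight Vs E ends q p xi / (\<Sum>z\<in>Pow E. fk_weight Vs E ends q p z)"

definition stoch_dom :: "'e set \<Rightarrow> ('e set \<Rightarrow> real) \<Rightarrow> ('e set \<Rightarrow> real) \<Rightarrow> bool" where
  "stoch_dom E mu nu \<longleftrightarrow>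
     (\<forall>A. A \<subseteq> Pow E \<longrightarrow> (\<forall>x\<in>A. \<forall>y. x \<subseteq> y \<and> y \<subseteq> E \<longrightarrow> y \<in> A) \<longrightarrow>
          (\<Sum>x\<in>A. nu x) \<le> (\<Sum>x\<in>A. mu x))"

text \<open>Dual edges are identified with primal edges (e* ~ e). eta_p s = {e. e* \<in> eta(sigma)},
  eta_d s' = eta(sigma').\<close>
definition eta_p :: "'d set \<Rightarrow> ('d \<Rightarrow> 'd) \<Rightarrow> ('d \<Rightarrow> 'd) \<Rightarrow> ('d set \<Rightarrow> complex) \<Rightarrow> 'd set set" where
  "eta_p D alpha rho s = {e \<in> cm_edges D alpha. \<exists>x\<in>cm_ends rho e. \<exists>y\<in>cm_ends rho e. s x \<noteq> s y}"

definition eta_d :: "'d set \<Rightarrow> ('d \<Rightarrow> 'd) \<Rightarrow> ('d \<Rightarrow> 'd) \<Rightarrow> ('d set \<Rightarrow> complex) \<Rightarrow> 'd set set" where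
  "eta_d D alpha rho s' = {e \<in> cm_edges D alpha. \<exists>x\<in>cm_dends alpha rho e. \<exists>y\<in>cm_dends alpha rho e. s' x \<noteq> s' y}"

definition spin_pairs :: "'d set \<Rightarrow> ('d \<Rightarrow> 'd) \<Rightarrow> ('d \<Rightarrow> 'd) \<Rightarrow> complex set \<Rightarrow> complex set
    \<Rightarrow> (('d set \<Rightarrow> complex) \<times> ('d set \<Rightarrow> complex)) set" where
  "spin_pairs D alpha rho Q Q' =
     {(s, s'). s \<in> cm_verts D rho \<rightarrow>\<^sub>E Q \<and> s' \<in> cm_faces D alpha rho \<rightarrow>\<^sub>E Q' \<and>
               eta_p D alpha rho s \<inter> eta_d D alpha rho s' = {}}"

definition spin_weight :: "'d set \<Rightarrow> ('d \<Rightarrow> 'd) \<Rightarrow> ('d \<Rightarrow> 'd) \<Rightarrow> real \<Rightarrow> real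
    \<Rightarrow> ('d set \<Rightarrow> complex) \<Rightarrow> ('d set \<Rightarrow> complex) \<Rightarrow> real" where
  "spin_weight D alpha rho a b s s' =
     a ^ card (eta_d D alpha rho s') * b ^ card (eta_p D alpha rho s)"

text \<open>Conditional probability that (e open = o, e* open = o') given the spins.
  Forced pairs: e \<in> eta(sigma') gives e open, e* closed; e* \<in> eta(sigma) gives e* open, e closed.\<close>
definition edge_prob :: "real \<Rightarrow> real \<Rightarrow> 'd set set \<Rightarrow> 'd set set \<Rightarrow> 'd set \<Rightarrow> bool \<Rightarrow> bool \<Rightarrow> real" where
  "edge_prob a b etp etd e cp cd =
     (if e \<in> etd then (if cp \<and> \<not> cd then 1 else 0)
      else if e \<in> etp then (if \<not> cp \<and> cd then 1 else 0)
      else if a + b \<le> 1 then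
        (if cp \<and> \<not> cd then a else if \<not> cp \<and> cd then b else if cp \<and> cd then 1 - a - b else 0)
      else
        (if cp \<and> \<not> cd then 1 - b else if \<not> cp \<and> cd then 1 - a else if cp \<and> cd then 0 else a + b - 1))"

text \<open>Joint law of (omega, omega'); omega' is represented as the set of primal edges e with e* open.\<close>
definition perc_law :: "'d set \<Rightarrow> ('d \<Rightarrow> 'd) \<Rightarrow> ('d \<Rightarrow> 'd) \<Rightarrow> complex set \<Rightarrow> complex set
    \<Rightarrow> real \<Rightarrow> real \<Rightarrow> 'd set set \<Rightarrow> 'd set set \<Rightarrow> real" where
  "perc_law D alpha rho Q Q' a b w w' =
     (\<Sum>(s, s')\<in>spin_pairs D alpha rho Q Q'.
        spin_weight D alpha rho a b s s' *
        (\<Prod>e\<in>cm_edges D alpha.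
           edge_prob a b (eta_p D alpha rho s) (eta_d D alpha rho s') e (e \<in> w) (e \<in> w')))
     / (\<Sum>(s, s')\<in>spin_pairs D alpha rho Q Q'. spin_weight D alpha rho a b s s')"

definition omega_law where
  "omega_law D alpha rho Q Q' a b w = (\<Sum>w'\<in>Pow (cm_edges D alpha). perc_law D alpha rho Q Q' a b w w')"

definition omega'_law where
  "omega'_law D alpha rho Q Q' a b w' = (\<Sum>w\<in>Pow (cm_edges D alpha). perc_law D alpha rho Q Q' a b w w')"

end

(*
  Summing out the dual edges and then the spins, the law of omega is proportional to
  q^k(omega) b^|E - omega| H(omega), where H(omega) sums a^|eta(sigma')| (1 - b)^|omega - eta(sigma')|
  over the dual spins sigma' with eta(sigma') inside omega: given the spins, every edge off
  eta(sigma)* and eta(sigma') is open with probability 1 - b independently, and exactly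
  q^k(omega) primal spin configurations agree along omega. As k is supermodular and (1 - b)^|omega' - omega| H(omega)
  <= H(omega') for omega inside omega', Holley's criterion holds; Holley's inequality is derived
  from the Ahlswede-Daykin four functions theorem. The dual statement is the same argument with
  the roles of G and G* exchanged.
*)
theory Submission
  imports Defs
begin

section \<open>Correlation inequalities on subsets of a finite set\<close>

lemma sum_Pow_insert:
  assumes "finite F" "e \<notin> F"
  shows "(\<Sum>x\<in>Pow (insert e F). f x) = (\<Sum>x\<in>Pow F. f x + f (insert e x))"
proof -
  have inj: "inj_on (insert e) (Pow F)"
    using assms(2) by (intro inj_onI) (metis PowD insert_ident subset_iff)
  have "(\<Sum>x\<in>Pow (insert e F). f x) = (\<Sum>x\<in>Pow F. f x) + (\<Sum>x\<in>insert e ` Pow F. f x)"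
    unfolding Pow_insert by (rule sum.union_disjoint) (use assms in auto)
  also have "(\<Sum>x\<in>insert e ` Pow F. f x) = (\<Sum>x\<in>Pow F. f (insert e x))"
    by (rule sum.reindex_cong[OF inj]) auto
  finally show ?thesis by (simp add: sum.distrib)
qed

lemma sum_Pow_prod_bool:
  fixes g :: "'a \<Rightarrow> bool \<Rightarrow> 'b::comm_semiring_1"
  assumes "finite E"
  shows "(\<Sum>w\<in>Pow E. \<Prod>e\<in>E. g e (e \<in> w)) = (\<Prod>e\<in>E. g e True + g e False)"
proof -
  have "(\<Prod>e\<in>E. g e (e \<in> w)) = (\<Prod>e\<in>w. g e True) * (\<Prod>e\<in>E - w. g e False)" if "w \<subseteq> E" for w
    using prod.subset_diff[OF that assms, of "\<lambda>e. g e (e \<in> w)"] by (simp add: mult.commute)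
  then show ?thesis by (simp add: prod_add[OF assms])
qed

lemma sum_swap3: "(\<Sum>w\<in>C. \<Sum>s\<in>A. \<Sum>t\<in>B. f w s t) = (\<Sum>s\<in>A. \<Sum>t\<in>B. \<Sum>w\<in>C. f w s t)"
  by (subst sum.swap) (rule sum.cong[OF refl sum.swap])

lemma ahlswede_daykin_two_points:
  fixes a0 a1 b0 b1 c0 c1 d0 d1 :: real
  assumes nonneg: "0 \<le> a0" "0 \<le> a1" "0 \<le> b0" "0 \<le> b1" "0 \<le> c0" "0 \<le> d1"
    and le: "a0 * b0 \<le> c0 * d0" "a0 * b1 \<le> c1 * d0" "a1 * b0 \<le> c1 * d0" "a1 * b1 \<le> c1 * d1"
  shows "(a0 + a1) * (b0 + b1) \<le> (c0 + c1) * (d0 + d1)"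
proof -
  \<comment> \<open>With \<open>m = c1 d0\<close>, the cross terms \<open>u = a0 b1\<close> and \<open>v = a1 b0\<close> satisfy \<open>u, v \<le> m\<close>
     and \<open>u v \<le> m c0 d1\<close>; then \<open>(m - u) (m - v) \<ge> 0\<close> gives \<open>u + v \<le> m + c0 d1\<close>.\<close>
  let ?m = "c1 * d0"
  have cross: "a0 * b1 + a1 * b0 \<le> ?m + c0 * d1"
  proof (cases "?m = 0")
    case True
    then show ?thesis using le(2,3) mult_nonneg_nonneg[OF nonneg(5,6)] by linarith
  next
    case False
    then have m_pos: "?m > 0" using le(2) mult_nonneg_nonneg[OF nonneg(1,4)] by linarith
    have "(a0 * b1) * (a1 * b0) = (a0 * b0) * (a1 * b1)" by (simp add: mult_ac)
    also have "\<dots> \<le> (c0 * d0) * (c1 * d1)"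
      using le(1) mult_nonneg_nonneg[OF nonneg(1,3)] mult_nonneg_nonneg[OF nonneg(2,4)]
      by (intro mult_mono[OF le(1,4)]) auto
    finally have prod_le: "(a0 * b1) * (a1 * b0) \<le> c0 * d1 * ?m" by (simp add: mult_ac)
    have "0 \<le> (?m - a0 * b1) * (?m - a1 * b0)"
      using le(2,3) by simp
    then have "(a0 * b1 + a1 * b0) * ?m \<le> (?m + c0 * d1) * ?m"
      using prod_le by (simp add: algebra_simps)
    then show ?thesis using m_pos by (rule mult_right_le_imp_le)
  qed
  then show ?thesis using le(1,4) by (simp add: algebra_simps)
qed

theorem ahlswede_daykin:
  fixes \<alpha> \<beta> \<gamma> \<delta> :: "'a set \<Rightarrow> real"
  assumes "finite E"
    and "\<And>x. x \<subseteq> E \<Longrightarrow> 0 \<le> \<alpha> x" "\<And>x. x \<subseteq> E \<Longrightarrow> 0 \<le> \<beta> x"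
    and "\<And>x. x \<subseteq> E \<Longrightarrow> 0 \<le> \<gamma> x" "\<And>x. x \<subseteq> E \<Longrightarrow> 0 \<le> \<delta> x"
    and "\<And>x y. x \<subseteq> E \<Longrightarrow> y \<subseteq> E \<Longrightarrow> \<alpha> x * \<beta> y \<le> \<gamma> (x \<union> y) * \<delta> (x \<inter> y)"
  shows "(\<Sum>x\<in>Pow E. \<alpha> x) * (\<Sum>x\<in>Pow E. \<beta> x) \<le> (\<Sum>x\<in>Pow E. \<gamma> x) * (\<Sum>x\<in>Pow E. \<delta> x)"
  using assms
proof (induction E arbitrary: \<alpha> \<beta> \<gamma> \<delta> rule: finite_induct)
  case empty
  then show ?case by simp
next
  case (insert e F)
  define lift :: "('a set \<Rightarrow> real) \<Rightarrow> 'a set \<Rightarrow> real" where "lift f x = f x + f (insert e x)" for f x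
  have sum_lift: "(\<Sum>x\<in>Pow (insert e F). f x) = (\<Sum>x\<in>Pow F. lift f x)" for f
    unfolding lift_def by (rule sum_Pow_insert) (use insert.hyps in auto)
  have subsets: "x \<subseteq> insert e F" "insert e x \<subseteq> insert e F" if "x \<subseteq> F" for x
    using that by auto
  have "(\<Sum>x\<in>Pow F. lift \<alpha> x) * (\<Sum>x\<in>Pow F. lift \<beta> x) \<le> (\<Sum>x\<in>Pow F. lift \<gamma> x) * (\<Sum>x\<in>Pow F. lift \<delta> x)"
  proof (rule insert.IH)
    fix x y assume x: "x \<subseteq> F" and y: "y \<subseteq> F"
    have "e \<notin> x" "e \<notin> y" using x y insert.hyps by auto
    then have "insert e x \<union> y = insert e (x \<union> y)" "x \<union> insert e y = insert e (x \<union> y)"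
      "insert e x \<union> insert e y = insert e (x \<union> y)" "insert e x \<inter> y = x \<inter> y"
      "x \<inter> insert e y = x \<inter> y" "insert e x \<inter> insert e y = insert e (x \<inter> y)"
      by auto
    then show "lift \<alpha> x * lift \<beta> y \<le> lift \<gamma> (x \<union> y) * lift \<delta> (x \<inter> y)"
      unfolding lift_def
      using insert.prems(5)[OF subsets(1)[OF x] subsets(1)[OF y]]
        insert.prems(5)[OF subsets(1)[OF x] subsets(2)[OF y]]
        insert.prems(5)[OF subsets(2)[OF x] subsets(1)[OF y]]
        insert.prems(5)[OF subsets(2)[OF x] subsets(2)[OF y]]
      by (intro ahlswede_daykin_two_points) (use x y in \<open>auto intro!: insert.prems(1-4)\<close>)
  qed (use insert.prems(1-4) subsets in \<open>auto simp: lift_def intro: add_nonneg_nonneg\<close>)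
  then show ?case unfolding sum_lift .
qed

theorem holley_stoch_dom:
  fixes \<mu> \<nu> :: "'a set \<Rightarrow> real"
  assumes E: "finite E"
    and nonneg: "\<And>x. x \<subseteq> E \<Longrightarrow> 0 \<le> \<mu> x" "\<And>x. x \<subseteq> E \<Longrightarrow> 0 \<le> \<nu> x"
    and pos: "0 < (\<Sum>x\<in>Pow E. \<mu> x)" "0 < (\<Sum>x\<in>Pow E. \<nu> x)"
    and holley: "\<And>x y. x \<subseteq> E \<Longrightarrow> y \<subseteq> E \<Longrightarrow> \<nu> x * \<mu> y \<le> \<mu> (x \<union> y) * \<nu> (x \<inter> y)"
  shows "stoch_dom E (\<lambda>x. \<mu> x / (\<Sum>z\<in>Pow E. \<mu> z)) (\<lambda>x. \<nu> x / (\<Sum>z\<in>Pow E. \<nu> z))"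
  unfolding stoch_dom_def
proof (intro allI impI)
  fix A assume A: "A \<subseteq> Pow E" and up: "\<forall>x\<in>A. \<forall>y. x \<subseteq> y \<and> y \<subseteq> E \<longrightarrow> y \<in> A"
  have restrict: "(\<Sum>x\<in>Pow E. if x \<in> A then f x else 0) = (\<Sum>x\<in>A. f x)" for f :: "'a set \<Rightarrow> real"
    using A E by (simp add: sum.inter_restrict[symmetric] Int_absorb1)
  have "(\<Sum>x\<in>Pow E. if x \<in> A then \<nu> x else 0) * (\<Sum>x\<in>Pow E. \<mu> x)
      \<le> (\<Sum>x\<in>Pow E. if x \<in> A then \<mu> x else 0) * (\<Sum>x\<in>Pow E. \<nu> x)"
  proof (rule ahlswede_daykin[OF E])
    fix x y assume x: "x \<subseteq> E" and y: "y \<subseteq> E"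
    show "(if x \<in> A then \<nu> x else 0) * \<mu> y \<le> (if x \<union> y \<in> A then \<mu> (x \<union> y) else 0) * \<nu> (x \<inter> y)"
    proof (cases "x \<in> A")
      case True
      then have "x \<union> y \<in> A" using up x y by blast
      then show ?thesis using True holley[OF x y] by simp
    next
      case False
      have "x \<union> y \<subseteq> E" "x \<inter> y \<subseteq> E" using x y by auto
      then show ?thesis using False nonneg by simp
    qed
  qed (use nonneg in auto)
  then have "(\<Sum>x\<in>A. \<nu> x) * (\<Sum>x\<in>Pow E. \<mu> x) \<le> (\<Sum>x\<in>A. \<mu> x) * (\<Sum>x\<in>Pow E. \<nu> x)"
    unfolding restrict .
  then show "(\<Sum>x\<in>A. \<nu> x / (\<Sum>z\<in>Pow E. \<nu> z)) \<le> (\<Sum>x\<in>A. \<mu> x / (\<Sum>z\<in>Pow E. \<mu> z))"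
    using pos by (simp add: sum_divide_distrib[symmetric] divide_simps)
qed

section \<open>Connected components\<close>

definition link_rel :: "('e \<Rightarrow> 'v set) \<Rightarrow> 'e set \<Rightarrow> ('v \<times> 'v) set" where
  "link_rel ends xi = {(x, y). \<exists>e\<in>xi. x \<in> ends e \<and> y \<in> ends e}"

definition comp_rel :: "'v set \<Rightarrow> ('e \<Rightarrow> 'v set) \<Rightarrow> 'e set \<Rightarrow> ('v \<times> 'v) set" where
  "comp_rel V ends xi = (link_rel ends xi)\<^sup>* \<inter> (V \<times> V)"

lemma n_comps_eq_card_quotient: "n_comps V ends xi = card (V // comp_rel V ends xi)"
  unfolding n_comps_def comp_rel_def link_rel_def ..

lemma equiv_comp_rel: "equiv V (comp_rel V ends xi)"
proof (rule equivI)
  have "sym (link_rel ends xi)"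
    unfolding link_rel_def sym_def by auto
  then show "sym (comp_rel V ends xi)"
    unfolding comp_rel_def using sym_rtrancl unfolding sym_def by blast
  show "trans (comp_rel V ends xi)"
    unfolding comp_rel_def trans_def by (blast intro: rtrancl_trans)
qed (auto simp: comp_rel_def refl_on_def)

lemma comp_rel_mono: "xi \<subseteq> xi' \<Longrightarrow> comp_rel V ends xi \<subseteq> comp_rel V ends xi'"
  unfolding comp_rel_def link_rel_def by (intro Int_mono rtrancl_mono) auto

lemma finite_quotient_comp_rel: "finite V \<Longrightarrow> finite (V // comp_rel V ends xi)"
  by (rule finite_quotient) (auto simp: comp_rel_def)

lemma comp_rel_refl: "v \<in> V \<Longrightarrow> (v, v) \<in> comp_rel V ends xi"
  unfolding comp_rel_def by simp

lemma comp_rel_if_link: "e \<in> xi \<Longrightarrow> x \<in> ends e \<Longrightarrow> y \<in> ends e \<Longrightarrow> x \<in> V \<Longrightarrow> y \<in> V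
    \<Longrightarrow> (x, y) \<in> comp_rel V ends xi"
  unfolding comp_rel_def link_rel_def by blast

lemma comp_rel_trans: "(u, v) \<in> comp_rel V ends xi \<Longrightarrow> (v, w) \<in> comp_rel V ends xi
    \<Longrightarrow> (u, w) \<in> comp_rel V ends xi"
  using equiv_comp_rel[of V ends xi] unfolding equiv_def trans_def by blast

lemma comp_rel_sym: "(u, v) \<in> comp_rel V ends xi \<Longrightarrow> (v, u) \<in> comp_rel V ends xi"
  using equiv_comp_rel[of V ends xi] unfolding equiv_def sym_def by blast

lemma eq_if_comp_rel:
  assumes "(u, v) \<in> comp_rel V ends xi" and "\<forall>e\<in>xi. \<forall>x\<in>ends e. \<forall>y\<in>ends e. s x = s y"
  shows "s u = s v"
proof -
  have "(u, v) \<in> (link_rel ends xi)\<^sup>*" using assms(1) unfolding comp_rel_def by blast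
  then show ?thesis
    by (induction rule: rtrancl_induct) (use assms(2) in \<open>auto simp: link_rel_def\<close>)
qed

lemma quotient_some_mem:
  assumes "equiv V R" "C \<in> V // R"
  shows "(SOME w. w \<in> C) \<in> C" "(SOME w. w \<in> C) \<in> V" "R `` {SOME w. w \<in> C} = C"
proof -
  obtain v where v: "v \<in> V" "C = R `` {v}" using assms(2) by (rule quotientE)
  then have "v \<in> C" using equiv_class_self[OF assms(1)] by simp
  then show "(SOME w. w \<in> C) \<in> C" by (rule someI)
  then show "(SOME w. w \<in> C) \<in> V" "R `` {SOME w. w \<in> C} = C"
    using v assms(1) by (auto simp: equiv_class_eq_iff)
qed

lemma bij_betw_colourings_of_components:
  assumes ends: "\<forall>e\<in>xi. ends e \<subseteq> V"
  defines "R \<equiv> comp_rel V ends xi"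
  shows "bij_betw (\<lambda>f. \<lambda>v\<in>V. f (R `` {v})) (V // R \<rightarrow>\<^sub>E Q)
    {s \<in> V \<rightarrow>\<^sub>E Q. \<forall>e\<in>xi. \<forall>x\<in>ends e. \<forall>y\<in>ends e. s x = s y}"
    (is "bij_betw ?lift _ ?S")
proof (rule bij_betw_byWitness[where f' = "\<lambda>s. \<lambda>C\<in>V // R. s (SOME v. v \<in> C)"])
  have eq: "equiv V R" unfolding R_def by (rule equiv_comp_rel)
  note some_mem = quotient_some_mem[OF eq]
  show "\<forall>f\<in>V // R \<rightarrow>\<^sub>E Q. (\<lambda>C\<in>V // R. ?lift f (SOME v. v \<in> C)) = f"
  proof (intro ballI ext)
    fix f C assume f: "f \<in> V // R \<rightarrow>\<^sub>E Q"
    show "(\<lambda>C\<in>V // R. ?lift f (SOME v. v \<in> C)) C = f C"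
      using some_mem[of C] PiE_arb[OF f, of C] by simp
  qed
  show "\<forall>s\<in>?S. ?lift (\<lambda>C\<in>V // R. s (SOME v. v \<in> C)) = s"
  proof (intro ballI ext)
    fix s v assume s: "s \<in> ?S"
    show "?lift (\<lambda>C\<in>V // R. s (SOME v. v \<in> C)) v = s v"
    proof (cases "v \<in> V")
      case True
      then have "(v, SOME w. w \<in> R `` {v}) \<in> R"
        using some_mem(1)[OF quotientI[OF True]] by simp
      then have "s v = s (SOME w. w \<in> R `` {v})"
        unfolding R_def by (rule eq_if_comp_rel) (use s in blast)
      then show ?thesis using True by (simp add: quotientI)
    next
      case False
      then show ?thesis using PiE_arb[of s V "\<lambda>_. Q" v] s by simp
    qed
  qed
  show "?lift ` (V // R \<rightarrow>\<^sub>E Q) \<subseteq> ?S"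
  proof (intro image_subsetI CollectI conjI ballI)
    fix f assume f: "f \<in> V // R \<rightarrow>\<^sub>E Q"
    then show "?lift f \<in> V \<rightarrow>\<^sub>E Q" by (auto intro: quotientI)
    fix e x y assume e: "e \<in> xi" and xy: "x \<in> ends e" "y \<in> ends e"
    then have "x \<in> V" "y \<in> V" using ends by auto
    moreover have "(x, y) \<in> R"
      using e xy \<open>x \<in> V\<close> \<open>y \<in> V\<close> unfolding R_def by (rule comp_rel_if_link)
    then have "R `` {x} = R `` {y}" by (rule equiv_class_eq[OF eq])
    ultimately show "?lift f x = ?lift f y" by simp
  qed
  show "(\<lambda>s. \<lambda>C\<in>V // R. s (SOME v. v \<in> C)) ` ?S \<subseteq> V // R \<rightarrow>\<^sub>E Q"
    using some_mem by auto
qed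

lemma card_colourings_constant_on_edges:
  assumes "finite V" and "\<forall>e\<in>xi. ends e \<subseteq> V"
  shows "card {s \<in> V \<rightarrow>\<^sub>E Q. \<forall>e\<in>xi. \<forall>x\<in>ends e. \<forall>y\<in>ends e. s x = s y} = card Q ^ n_comps V ends xi"
proof -
  have "card {s \<in> V \<rightarrow>\<^sub>E Q. \<forall>e\<in>xi. \<forall>x\<in>ends e. \<forall>y\<in>ends e. s x = s y}
      = card (V // comp_rel V ends xi \<rightarrow>\<^sub>E Q)"
    using bij_betw_same_card[OF bij_betw_colourings_of_components[OF assms(2), of Q]] by simp
  also have "\<dots> = card Q ^ n_comps V ends xi"
    using finite_quotient_comp_rel[OF assms(1), of ends xi]
    by (simp add: card_PiE n_comps_eq_card_quotient)
  finally show ?thesis .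
qed

definition comp_classes :: "'v set \<Rightarrow> ('e \<Rightarrow> 'v set) \<Rightarrow> 'e set \<Rightarrow> 'v set \<Rightarrow> 'v set set" where
  "comp_classes V ends xi S = (\<lambda>v. comp_rel V ends xi `` {v}) ` S"

lemma comp_rel_insert_iff:
  assumes ends: "\<forall>e\<in>insert e0 xi. ends e \<subseteq> V"
  defines "R \<equiv> comp_rel V ends xi"
  shows "(u, w) \<in> comp_rel V ends (insert e0 xi) \<longleftrightarrow>
    (u, w) \<in> R \<or> (u \<in> R `` ends e0 \<and> w \<in> R `` ends e0)"
proof
  assume "(u, w) \<in> comp_rel V ends (insert e0 xi)"
  then have u: "u \<in> V" and "(u, w) \<in> (link_rel ends (insert e0 xi))\<^sup>*"
    unfolding comp_rel_def by auto
  from this(2) show "(u, w) \<in> R \<or> (u \<in> R `` ends e0 \<and> w \<in> R `` ends e0)"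
  proof (induction rule: rtrancl_induct)
    case base
    show ?case using u by (simp add: R_def comp_rel_refl)
  next
    case (step y z)
    then obtain e where e: "e \<in> insert e0 xi" "y \<in> ends e" "z \<in> ends e"
      unfolding link_rel_def by blast
    with ends have yz: "y \<in> V" "z \<in> V" by auto
    show ?case
    proof (cases "e \<in> xi")
      case True
      then have "(y, z) \<in> R" using e yz unfolding R_def by (intro comp_rel_if_link)
      then show ?thesis using step.IH unfolding R_def by (blast intro: comp_rel_trans)
    next
      case False
      then have "e = e0" using e by simp
      then have S: "y \<in> ends e0" "z \<in> ends e0" using e by auto
      have "(z, z) \<in> R" using yz(2) unfolding R_def by (rule comp_rel_refl)
      then have "z \<in> R `` ends e0" using S(2) by blast
      moreover have "u \<in> R `` ends e0" if "(u, y) \<in> R"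
        using comp_rel_sym[OF that[unfolded R_def]] S(1) unfolding R_def by blast
      ultimately show ?thesis using step.IH by blast
    qed
  qed
next
  assume "(u, w) \<in> R \<or> (u \<in> R `` ends e0 \<and> w \<in> R `` ends e0)"
  then show "(u, w) \<in> comp_rel V ends (insert e0 xi)"
  proof
    assume "(u, w) \<in> R"
    then show ?thesis using comp_rel_mono[of xi "insert e0 xi"] unfolding R_def by blast
  next
    let ?R' = "comp_rel V ends (insert e0 xi)"
    assume "u \<in> R `` ends e0 \<and> w \<in> R `` ends e0"
    then obtain s t where st: "s \<in> ends e0" "t \<in> ends e0" "(s, u) \<in> R" "(t, w) \<in> R" by blast
    then have "(s, u) \<in> ?R'" "(t, w) \<in> ?R'"
      using comp_rel_mono[of xi "insert e0 xi"] unfolding R_def by blast+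
    moreover have "(s, t) \<in> ?R'"
      using st ends by (intro comp_rel_if_link) auto
    ultimately show ?thesis by (blast intro: comp_rel_trans comp_rel_sym)
  qed
qed

lemma comp_classes_mem_iff:
  assumes "v \<in> V" "S \<subseteq> V"
  shows "comp_rel V ends xi `` {v} \<in> comp_classes V ends xi S \<longleftrightarrow> v \<in> comp_rel V ends xi `` S"
proof
  let ?R = "comp_rel V ends xi"
  assume "?R `` {v} \<in> comp_classes V ends xi S"
  then obtain t where t: "t \<in> S" "?R `` {v} = ?R `` {t}"
    unfolding comp_classes_def by blast
  then have "(t, v) \<in> ?R" using eq_equiv_class[OF t(2)[symmetric] equiv_comp_rel] assms(1) by simp
  then show "v \<in> ?R `` S" using t(1) by blast
next
  let ?R = "comp_rel V ends xi"
  assume "v \<in> ?R `` S"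
  then obtain t where t: "t \<in> S" "(t, v) \<in> ?R" by blast
  have "?R `` {v} = ?R `` {t}" using equiv_class_eq[OF equiv_comp_rel t(2)] by simp
  then show "?R `` {v} \<in> comp_classes V ends xi S"
    unfolding comp_classes_def using t(1) by (rule image_eqI)
qed

lemma comp_rel_insert_class:
  assumes ends: "\<forall>e\<in>insert e0 xi. ends e \<subseteq> V"
  defines "R \<equiv> comp_rel V ends xi"
  shows "comp_rel V ends (insert e0 xi) `` {v} = (if v \<in> R `` ends e0 then R `` ends e0 else R `` {v})"
proof (cases "v \<in> R `` ends e0")
  case True
  have "w \<in> R `` ends e0" if "(v, w) \<in> R" for w
    using True that unfolding R_def by (blast intro: comp_rel_trans)
  then show ?thesis
    using True comp_rel_insert_iff[OF ends, of v] unfolding R_def by auto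
next
  case False
  then show ?thesis
    using comp_rel_insert_iff[OF ends, of v] unfolding R_def by auto
qed

lemma quotient_comp_rel_insert:
  assumes ends: "\<forall>e\<in>insert e0 xi. ends e \<subseteq> V" and ne: "ends e0 \<noteq> {}"
  defines "R \<equiv> comp_rel V ends xi" and "M \<equiv> comp_classes V ends xi (ends e0)"
  shows "V // comp_rel V ends (insert e0 xi) = insert (R `` ends e0) (V // R - M)"
    and "R `` ends e0 \<notin> V // R - M"
proof -
  let ?R' = "comp_rel V ends (insert e0 xi)" and ?C = "R `` ends e0"
  have in_M: "R `` {v} \<in> M \<longleftrightarrow> v \<in> ?C" if "v \<in> V" for v
    using comp_classes_mem_iff[OF that, of "ends e0" ends xi] ends unfolding R_def M_def by simp
  note class' = comp_rel_insert_class[OF ends, folded R_def]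
  obtain s0 where s0: "s0 \<in> ends e0" using ne by blast
  then have s0V: "s0 \<in> V" using ends by auto
  then have "(s0, s0) \<in> R" unfolding R_def by (rule comp_rel_refl)
  then have s0C: "s0 \<in> ?C" using s0 by blast
  show "V // ?R' = insert ?C (V // R - M)"
  proof (intro equalityI subsetI)
    fix C assume "C \<in> V // ?R'"
    then obtain v where v: "v \<in> V" "C = ?R' `` {v}" by (rule quotientE)
    then show "C \<in> insert ?C (V // R - M)"
      using class'[of v] in_M[OF v(1)] quotientI[OF v(1), of R] by (cases "v \<in> ?C") simp_all
  next
    fix C assume C: "C \<in> insert ?C (V // R - M)"
    show "C \<in> V // ?R'"
    proof (cases "C = ?C")
      case True
      then show ?thesis using class'[of s0] s0C quotientI[OF s0V, of ?R'] by simp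
    next
      case False
      then obtain v where v: "v \<in> V" "C = R `` {v}" "C \<notin> M"
        using C by (auto elim: quotientE)
      then show ?thesis using class'[of v] in_M[OF v(1)] quotientI[OF v(1), of ?R'] by simp
    qed
  qed
  show "?C \<notin> V // R - M"
  proof
    assume "?C \<in> V // R - M"
    then obtain v where v: "v \<in> V" "?C = R `` {v}" "?C \<notin> M"
      by (auto elim: quotientE)
    have "v \<in> ?C" using v(1,2) equiv_class_self[OF equiv_comp_rel] unfolding R_def by simp
    then show False using v in_M by simp
  qed
qed

lemma n_comps_insert:
  assumes V: "finite V" and ends: "\<forall>e\<in>insert e0 xi. ends e \<subseteq> V" and ne: "ends e0 \<noteq> {}"
  shows "n_comps V ends (insert e0 xi) + card (comp_classes V ends xi (ends e0)) = n_comps V ends xi + 1"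
proof -
  let ?M = "comp_classes V ends xi (ends e0)" and ?Q = "V // comp_rel V ends xi"
  have M_sub: "?M \<subseteq> ?Q"
    using ends unfolding comp_classes_def by (auto intro: quotientI)
  have fin: "finite ?Q" using V by (rule finite_quotient_comp_rel)
  have "n_comps V ends (insert e0 xi) = card (?Q - ?M) + 1"
    unfolding n_comps_eq_card_quotient quotient_comp_rel_insert[OF ends ne]
    using quotient_comp_rel_insert(2)[OF ends ne] fin by simp
  moreover have "card (?Q - ?M) + card ?M = card ?Q"
    using M_sub fin by (metis card_Diff_subset card_mono finite_subset le_add_diff_inverse2)
  ultimately show ?thesis by (simp add: n_comps_eq_card_quotient)
qed

lemma card_comp_classes_antimono:
  assumes "xi \<subseteq> xi'" "S \<subseteq> V" "finite S"
  shows "card (comp_classes V ends xi' S) \<le> card (comp_classes V ends xi S)"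
proof -
  have "comp_classes V ends xi' S = (\<lambda>C. comp_rel V ends xi' `` C) ` comp_classes V ends xi S"
    using refines_equiv_class_eq2[OF comp_rel_mono[OF assms(1)] equiv_comp_rel[of V ends] equiv_comp_rel]
    unfolding comp_classes_def image_image by simp
  then show ?thesis
    using assms(3) by (simp add: card_image_le comp_classes_def)
qed

lemma n_comps_drop_antimono:
  assumes V: "finite V" and ends: "\<forall>e\<in>E. ends e \<subseteq> V \<and> ends e \<noteq> {}"
    and S: "finite S" "S \<subseteq> E" and z: "z \<subseteq> z'" "z' \<subseteq> E"
  shows "int (n_comps V ends z') - int (n_comps V ends (z' \<union> S))
       \<le> int (n_comps V ends z) - int (n_comps V ends (z \<union> S))"
  using S
proof (induction S rule: finite_induct)
  case empty
  then show ?case by simp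
next
  case (insert e S)
  have e: "e \<in> E" using insert.prems by simp
  have ne: "ends e \<noteq> {}" using ends e by blast
  have "\<forall>f\<in>insert e (z \<union> S). ends f \<subseteq> V" "\<forall>f\<in>insert e (z' \<union> S). ends f \<subseteq> V"
    using ends insert.prems z by blast+
  note step = n_comps_insert[OF V this(1) ne] n_comps_insert[OF V this(2) ne]
  have "card (comp_classes V ends (z' \<union> S) (ends e)) \<le> card (comp_classes V ends (z \<union> S) (ends e))"
    using z ends e V by (intro card_comp_classes_antimono) (auto intro: finite_subset[of _ V])
  then show ?case using insert.IH insert.prems step by simp
qed

lemma n_comps_supermodular:
  assumes "finite V" and "\<forall>e\<in>E. ends e \<subseteq> V \<and> ends e \<noteq> {}" and "finite E"
    and "x \<subseteq> E" "y \<subseteq> E"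
  shows "n_comps V ends x + n_comps V ends y \<le> n_comps V ends (x \<union> y) + n_comps V ends (x \<inter> y)"
proof -
  have "int (n_comps V ends y) - int (n_comps V ends (y \<union> x))
      \<le> int (n_comps V ends (x \<inter> y)) - int (n_comps V ends ((x \<inter> y) \<union> x))"
    using assms by (intro n_comps_drop_antimono) (auto intro: finite_subset)
  moreover have "(x \<inter> y) \<union> x = x" "y \<union> x = x \<union> y" by auto
  ultimately show ?thesis by simp
qed

section \<open>Spins on a graph and its dual sharing an edge set\<close>

definition disagree_edges :: "'e set \<Rightarrow> ('e \<Rightarrow> 'v set) \<Rightarrow> ('v \<Rightarrow> 'c) \<Rightarrow> 'e set" where
  "disagree_edges E ends s = {e \<in> E. \<exists>x\<in>ends e. \<exists>y\<in>ends e. s x \<noteq> s y}"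

lemma disagree_edges_subset: "disagree_edges E ends s \<subseteq> E"
  unfolding disagree_edges_def by auto

lemma card_spins_agreeing_on:
  assumes "w \<subseteq> E" "finite V" "\<forall>e\<in>E. ends e \<subseteq> V"
  shows "card {s \<in> V \<rightarrow>\<^sub>E Q. disagree_edges E ends s \<inter> w = {}} = card Q ^ n_comps V ends w"
proof -
  have "{s \<in> V \<rightarrow>\<^sub>E Q. disagree_edges E ends s \<inter> w = {}} =
      {s \<in> V \<rightarrow>\<^sub>E Q. \<forall>e\<in>w. \<forall>x\<in>ends e. \<forall>y\<in>ends e. s x = s y}"
    using assms(1) unfolding disagree_edges_def by blast
  also have "card \<dots> = card Q ^ n_comps V ends w"
    using assms by (intro card_colourings_constant_on_edges) auto
  finally show ?thesis .
qed

lemma prod_if_mem_eq_power: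
  fixes c :: "'a::comm_monoid_mult"
  assumes "finite E" "A \<subseteq> E"
  shows "(\<Prod>e\<in>E. if e \<in> A then c else 1) = c ^ card A"
  using assms by (simp add: prod.If_cases Int_absorb1)

text \<open>Conditional law of the primal edge \<open>e\<close> given the spins, with \<open>X = \<eta>(\<sigma>)\<^sup>*\<close> and
  \<open>Y = \<eta>(\<sigma>')\<close>: after summing out the dual edge, a free edge is open with probability \<open>1 - b\<close>.\<close>
definition primal_marginal :: "real \<Rightarrow> 'e set \<Rightarrow> 'e set \<Rightarrow> 'e \<Rightarrow> bool \<Rightarrow> real" where
  "primal_marginal b X Y e c =
     (if e \<in> Y then (if c then 1 else 0) else if e \<in> X then (if c then 0 else 1)
      else if c then 1 - b else b)"

lemma primal_marginal_sum: "primal_marginal b X Y e True + primal_marginal b X Y e False = 1"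
  unfolding primal_marginal_def by simp

lemma prod_primal_marginal:
  assumes E: "finite E" and XY: "X \<subseteq> E" "Y \<subseteq> E" "X \<inter> Y = {}" and w: "w \<subseteq> E"
  shows "(\<Prod>e\<in>E. primal_marginal b X Y e (e \<in> w)) =
     (if Y \<subseteq> w \<and> X \<inter> w = {} then (1 - b) ^ card (w - Y) * b ^ card (E - w - X) else 0)"
proof (cases "Y \<subseteq> w \<and> X \<inter> w = {}")
  case True
  then have "(\<Prod>e\<in>E. primal_marginal b X Y e (e \<in> w)) =
        (\<Prod>e\<in>E. (if e \<in> w - Y then 1 - b else 1) * (if e \<in> E - w - X then b else 1))"
    by (intro prod.cong) (auto simp: primal_marginal_def)
  also have "\<dots> = (1 - b) ^ card (w - Y) * b ^ card (E - w - X)"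
  proof -
    have "w - Y \<subseteq> E" "E - w - X \<subseteq> E" using w by auto
    then show ?thesis unfolding prod.distrib by (simp only: prod_if_mem_eq_power[OF E])
  qed
  finally show ?thesis using True by simp
next
  case False
  then obtain e where "e \<in> Y \<and> e \<notin> w \<or> e \<in> X \<and> e \<in> w" by blast
  then have "e \<in> E" "primal_marginal b X Y e (e \<in> w) = 0"
    using XY by (auto simp: primal_marginal_def)
  then show ?thesis using E False by (auto simp: prod_zero_iff)
qed

definition pair_weight :: "'e set \<Rightarrow> ('e \<Rightarrow> 'v set) \<Rightarrow> ('e \<Rightarrow> 'u set) \<Rightarrow> real \<Rightarrow> real
    \<Rightarrow> ('v \<Rightarrow> 'c) \<Rightarrow> ('u \<Rightarrow> 'k) \<Rightarrow> real" where
  "pair_weight E ends ends' a b s t =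
     (if disagree_edges E ends s \<inter> disagree_edges E ends' t = {}
      then a ^ card (disagree_edges E ends' t) * b ^ card (disagree_edges E ends s) else 0)"

definition spin_partition :: "'e set \<Rightarrow> 'v set \<Rightarrow> ('e \<Rightarrow> 'v set) \<Rightarrow> 'c set
    \<Rightarrow> 'u set \<Rightarrow> ('e \<Rightarrow> 'u set) \<Rightarrow> 'k set \<Rightarrow> real \<Rightarrow> real \<Rightarrow> real" where
  "spin_partition E V ends Q U ends' Q' a b =
     (\<Sum>s\<in>V \<rightarrow>\<^sub>E Q. \<Sum>t\<in>U \<rightarrow>\<^sub>E Q'. pair_weight E ends ends' a b s t)"

definition omega_weight :: "'e set \<Rightarrow> 'v set \<Rightarrow> ('e \<Rightarrow> 'v set) \<Rightarrow> 'c set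
    \<Rightarrow> 'u set \<Rightarrow> ('e \<Rightarrow> 'u set) \<Rightarrow> 'k set \<Rightarrow> real \<Rightarrow> real \<Rightarrow> 'e set \<Rightarrow> real" where
  "omega_weight E V ends Q U ends' Q' a b w =
     (\<Sum>s\<in>V \<rightarrow>\<^sub>E Q. \<Sum>t\<in>U \<rightarrow>\<^sub>E Q'. pair_weight E ends ends' a b s t *
        (\<Prod>e\<in>E. primal_marginal b (disagree_edges E ends s) (disagree_edges E ends' t) e (e \<in> w)))"

definition dual_weight :: "'e set \<Rightarrow> 'u set \<Rightarrow> ('e \<Rightarrow> 'u set) \<Rightarrow> 'k set \<Rightarrow> real \<Rightarrow> real
    \<Rightarrow> 'e set \<Rightarrow> real" where
  "dual_weight E U ends' Q' a b w =
     (\<Sum>t\<in>U \<rightarrow>\<^sub>E Q'. if disagree_edges E ends' t \<subseteq> w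
        then a ^ card (disagree_edges E ends' t) * (1 - b) ^ (card w - card (disagree_edges E ends' t))
        else 0)"

lemma pair_weight_swap: "pair_weight E ends ends' a b s t = pair_weight E ends' ends b a t s"
  unfolding pair_weight_def by (simp add: Int_commute mult.commute)

lemma spin_partition_swap:
  "spin_partition E V ends Q U ends' Q' a b = spin_partition E U ends' Q' V ends Q b a"
  unfolding spin_partition_def pair_weight_swap[of E ends]
  by (rule sum.swap[of "\<lambda>s t. pair_weight E ends' ends b a t s"])

lemma pair_weight_mult_prod_primal_marginal:
  fixes ends :: "'e \<Rightarrow> 'v set" and ends' :: "'e \<Rightarrow> 'u set" and s :: "'v \<Rightarrow> 'c" and t :: "'u \<Rightarrow> 'k"
  assumes E: "finite E" and w: "w \<subseteq> E"
  defines "X \<equiv> disagree_edges E ends s" and "Y \<equiv> disagree_edges E ends' t"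
  shows "pair_weight E ends ends' a b s t * (\<Prod>e\<in>E. primal_marginal b X Y e (e \<in> w)) =
    (if X \<inter> w = {} then 1 else 0) *
    (if Y \<subseteq> w then a ^ card Y * (1 - b) ^ (card w - card Y) else 0) * b ^ card (E - w)"
proof -
  have XE: "X \<subseteq> E" and YE: "Y \<subseteq> E"
    unfolding X_def Y_def by (rule disagree_edges_subset)+
  show ?thesis
  proof (cases "Y \<subseteq> w \<and> X \<inter> w = {}")
    case True
    then have XEw: "X \<subseteq> E - w" and XY: "X \<inter> Y = {}" using XE by blast+
    have fin: "finite w" "finite (E - w)" using E finite_subset[OF w E] by auto
    have "pair_weight E ends ends' a b s t = a ^ card Y * b ^ card X"
      using XY unfolding pair_weight_def X_def Y_def by simp
    moreover have "(\<Prod>e\<in>E. primal_marginal b X Y e (e \<in> w)) =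
        (1 - b) ^ card (w - Y) * b ^ card (E - w - X)"
      using prod_primal_marginal[OF E XE YE XY w] True by simp
    moreover have "card (w - Y) = card w - card Y"
      using True finite_subset[of Y w] fin by (simp add: card_Diff_subset)
    moreover have "b ^ card X * b ^ card (E - w - X) = b ^ card (E - w)"
      using XEw fin by (simp add: card_Diff_subset card_mono finite_subset flip: power_add)
    ultimately show ?thesis
      using True by (simp add: mult_ac)
  next
    case False
    then have "X \<inter> Y = {} \<Longrightarrow> (\<Prod>e\<in>E. primal_marginal b X Y e (e \<in> w)) = 0"
      using prod_primal_marginal[OF E XE YE _ w, of b] by (simp only: if_False)
    then show ?thesis
      using False unfolding pair_weight_def X_def[symmetric] Y_def[symmetric] by auto
  qed
qed

lemma omega_weight_eq:
  assumes E: "finite E" and w: "w \<subseteq> E" and V: "finite V" "finite Q" and ends: "\<forall>e\<in>E. ends e \<subseteq> V"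
  shows "omega_weight E V ends Q U ends' Q' a b w =
    b ^ card (E - w) * card Q ^ n_comps V ends w * dual_weight E U ends' Q' a b w"
proof -
  let ?agree = "\<lambda>s. disagree_edges E ends s \<inter> w = {}"
  have "omega_weight E V ends Q U ends' Q' a b w =
      (\<Sum>s\<in>V \<rightarrow>\<^sub>E Q. (if ?agree s then 1 else 0) * (dual_weight E U ends' Q' a b w * b ^ card (E - w)))"
    unfolding omega_weight_def pair_weight_mult_prod_primal_marginal[OF E w] dual_weight_def
    by (simp add: sum_distrib_left sum_distrib_right mult.assoc)
  also have "\<dots> = real (card {s \<in> V \<rightarrow>\<^sub>E Q. ?agree s}) * dual_weight E U ends' Q' a b w * b ^ card (E - w)"
    using V by (simp add: sum_distrib_right[symmetric] sum.inter_filter[symmetric] finite_PiE mult.assoc)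
  finally show ?thesis
    using card_spins_agreeing_on[OF w V(1) ends, of Q] by (simp add: algebra_simps)
qed

lemma dual_weight_nonneg: "0 \<le> a \<Longrightarrow> b \<le> 1 \<Longrightarrow> 0 \<le> dual_weight E U ends' Q' a b w"
  unfolding dual_weight_def by (intro sum_nonneg) auto

lemma dual_weight_mono:
  assumes E: "finite E" and yz: "y \<subseteq> z" "z \<subseteq> E" and a: "0 \<le> a" and b: "b \<le> 1"
  shows "(1 - b) ^ (card z - card y) * dual_weight E U ends' Q' a b y \<le> dual_weight E U ends' Q' a b z"
  unfolding dual_weight_def sum_distrib_left
proof (rule sum_mono)
  fix t
  let ?Y = "disagree_edges E ends' t"
  have fin: "finite z" "finite y" using finite_subset[OF yz(2) E] finite_subset[OF yz(1)] by auto
  show "(1 - b) ^ (card z - card y) * (if ?Y \<subseteq> y then a ^ card ?Y * (1 - b) ^ (card y - card ?Y) else 0)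
        \<le> (if ?Y \<subseteq> z then a ^ card ?Y * (1 - b) ^ (card z - card ?Y) else 0)"
  proof (cases "?Y \<subseteq> y")
    case True
    have "card ?Y \<le> card y" "card y \<le> card z" using True yz(1) fin by (simp_all add: card_mono)
    then have "card z - card y + (card y - card ?Y) = card z - card ?Y" by simp
    then show ?thesis using True yz by (simp add: algebra_simps flip: power_add)
  next
    case False
    then show ?thesis using a b by auto
  qed
qed

lemma sum_omega_weight:
  assumes "finite E"
  shows "(\<Sum>w\<in>Pow E. omega_weight E V ends Q U ends' Q' a b w) = spin_partition E V ends Q U ends' Q' a b"
proof -
  let ?P = "\<lambda>s t w. \<Prod>e\<in>E. primal_marginal b (disagree_edges E ends s) (disagree_edges E ends' t) e (e \<in> w)"
  have total: "(\<Sum>w\<in>Pow E. ?P s t w) = 1" for s t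
    using sum_Pow_prod_bool[OF assms, of "primal_marginal b (disagree_edges E ends s) (disagree_edges E ends' t)"]
    by (simp add: primal_marginal_sum)
  have "(\<Sum>w\<in>Pow E. omega_weight E V ends Q U ends' Q' a b w) =
      (\<Sum>s\<in>V \<rightarrow>\<^sub>E Q. \<Sum>t\<in>U \<rightarrow>\<^sub>E Q'. \<Sum>w\<in>Pow E. pair_weight E ends ends' a b s t * ?P s t w)"
    unfolding omega_weight_def by (rule sum_swap3)
  also have "\<dots> = spin_partition E V ends Q U ends' Q' a b"
    unfolding spin_partition_def by (simp add: total flip: sum_distrib_left)
  finally show ?thesis .
qed

lemma spin_partition_pos:
  assumes "finite V" "finite Q" "finite U" "finite Q'" "Q \<noteq> {}" "Q' \<noteq> {}"
    and "\<forall>e\<in>E. ends e \<subseteq> V" "\<forall>e\<in>E. ends' e \<subseteq> U" and "0 \<le> a" "0 \<le> b"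
  shows "0 < spin_partition E V ends Q U ends' Q' a b"
proof -
  obtain c c' where c: "c \<in> Q" "c' \<in> Q'" using assms by blast
  let ?s = "\<lambda>v\<in>V. c" and ?t = "\<lambda>u\<in>U. c'"
  have "disagree_edges E ends ?s = {}" "disagree_edges E ends' ?t = {}"
    using assms unfolding disagree_edges_def by (auto simp: subset_iff)
  then have "pair_weight E ends ends' a b ?s ?t = 1" by (simp add: pair_weight_def)
  moreover have "pair_weight E ends ends' a b ?s ?t \<le> spin_partition E V ends Q U ends' Q' a b"
    unfolding spin_partition_def using assms c
    by (intro member_le_sum[of ?s, THEN order_trans[rotated]] member_le_sum[of ?t] sum_nonneg)
      (auto simp: pair_weight_def finite_PiE)
  ultimately show ?thesis by simp
qed

lemma n_comps_weight_log_supermodular: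
  fixes q b :: real
  assumes V: "finite V" and ends: "\<forall>e\<in>E. ends e \<subseteq> V \<and> ends e \<noteq> {}" and E: "finite E"
    and x: "x \<subseteq> E" and y: "y \<subseteq> E" and q: "1 \<le> q" and b: "0 \<le> b"
  defines "G z \<equiv> q ^ n_comps V ends z * b ^ card (E - z)"
  shows "G x * G y \<le> G (x \<union> y) * G (x \<inter> y)"
proof -
  let ?k = "n_comps V ends"
  have "card (E - x) + card (E - y) = card ((E - x) \<union> (E - y)) + card ((E - x) \<inter> (E - y))"
    using E by (intro card_Un_Int) auto
  moreover have "(E - x) \<union> (E - y) = E - (x \<inter> y)" "(E - x) \<inter> (E - y) = E - (x \<union> y)" by auto
  ultimately have "b ^ card (E - x) * b ^ card (E - y) = b ^ card (E - (x \<union> y)) * b ^ card (E - (x \<inter> y))"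
    by (simp add: add.commute flip: power_add)
  moreover have "q ^ ?k x * q ^ ?k y \<le> q ^ ?k (x \<union> y) * q ^ ?k (x \<inter> y)"
    using n_comps_supermodular[OF V ends E x y] power_increasing[OF _ q] by (simp flip: power_add)
  ultimately have "(q ^ ?k x * q ^ ?k y) * (b ^ card (E - x) * b ^ card (E - y))
      \<le> (q ^ ?k (x \<union> y) * q ^ ?k (x \<inter> y)) * (b ^ card (E - (x \<union> y)) * b ^ card (E - (x \<inter> y)))"
    using b by (simp add: mult_right_mono)
  then show ?thesis unfolding G_def by (simp add: mult_ac)
qed

lemma omega_weight_holley:
  assumes E: "finite E" and V: "finite V" "finite Q" and Q: "Q \<noteq> {}"
    and ends: "\<forall>e\<in>E. ends e \<subseteq> V \<and> ends e \<noteq> {}"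
    and a: "0 \<le> a" and b: "0 \<le> b" "b \<le> 1" and x: "x \<subseteq> E" and y: "y \<subseteq> E"
  shows "fk_weight V E ends (card Q) (1 - b) x * omega_weight E V ends Q U ends' Q' a b y
       \<le> omega_weight E V ends Q U ends' Q' a b (x \<union> y) * fk_weight V E ends (card Q) (1 - b) (x \<inter> y)"
proof -
  have ends_V: "\<forall>e\<in>E. ends e \<subseteq> V" using ends by blast
  let ?q = "real (card Q)" and ?H = "dual_weight E U ends' Q' a b"
  let ?G = "\<lambda>z. ?q ^ n_comps V ends z * b ^ card (E - z)"
  have q: "1 \<le> ?q" using Q V by (simp add: Suc_le_eq card_gt_0_iff)
  have xy: "x \<union> y \<subseteq> E" "x \<inter> y \<subseteq> E" using x y by auto
  have fin: "finite x" "finite y" using finite_subset[OF x E] finite_subset[OF y E] .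
  have "card x = card (x \<inter> y) + (card (x \<union> y) - card y)"
    using card_Un_Int[OF fin] card_mono[of "x \<union> y" y] fin by simp
  then have "(1 - b) ^ card x * ?H y = (1 - b) ^ card (x \<inter> y) * ((1 - b) ^ (card (x \<union> y) - card y) * ?H y)"
    by (simp add: power_add mult.assoc)
  also have "\<dots> \<le> (1 - b) ^ card (x \<inter> y) * ?H (x \<union> y)"
    using dual_weight_mono[OF E _ xy(1) a b(2)] b by (intro mult_left_mono) auto
  finally have H_part: "(1 - b) ^ card x * ?H y \<le> (1 - b) ^ card (x \<inter> y) * ?H (x \<union> y)" .
  have "fk_weight V E ends ?q (1 - b) x * omega_weight E V ends Q U ends' Q' a b y
      = (?G x * ?G y) * ((1 - b) ^ card x * ?H y)"
    unfolding fk_weight_def omega_weight_eq[OF E y V ends_V] by (simp add: algebra_simps)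
  also have "\<dots> \<le> (?G (x \<union> y) * ?G (x \<inter> y)) * ((1 - b) ^ card (x \<inter> y) * ?H (x \<union> y))"
    by (rule mult_mono[OF n_comps_weight_log_supermodular[OF V(1) ends E x y q b(1)] H_part])
      (use b q dual_weight_nonneg[OF a b(2), of E U ends' Q' y] in auto)
  also have "\<dots> = omega_weight E V ends Q U ends' Q' a b (x \<union> y) * fk_weight V E ends ?q (1 - b) (x \<inter> y)"
    unfolding fk_weight_def omega_weight_eq[OF E xy(1) V ends_V] by (simp add: algebra_simps)
  finally show ?thesis .
qed

theorem omega_law_dominates_fk:
  assumes E: "finite E" and fin: "finite V" "finite Q" "finite U" "finite Q'" and ne: "Q \<noteq> {}" "Q' \<noteq> {}"
    and ends: "\<forall>e\<in>E. ends e \<subseteq> V \<and> ends e \<noteq> {}" and ends': "\<forall>e\<in>E. ends' e \<subseteq> U"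
    and a: "0 \<le> a" and b: "0 < b" "b \<le> 1"
  shows "stoch_dom E (\<lambda>w. omega_weight E V ends Q U ends' Q' a b w / spin_partition E V ends Q U ends' Q' a b)
           (fk V E ends (card Q) (1 - b))"
proof -
  let ?W = "omega_weight E V ends Q U ends' Q' a b" and ?F = "fk_weight V E ends (card Q) (1 - b)"
  have ends_V: "\<forall>e\<in>E. ends e \<subseteq> V" using ends by blast
  have F_nonneg: "0 \<le> ?F w" for w
    using b unfolding fk_weight_def by simp
  have W_nonneg: "0 \<le> ?W w" if "w \<subseteq> E" for w
    using b dual_weight_nonneg[OF a b(2), of E U ends' Q' w]
    unfolding omega_weight_eq[OF E that fin(1,2) ends_V] by simp
  have "0 < ?F {}" using b ne fin by (simp add: fk_weight_def card_gt_0_iff)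
  also have "?F {} \<le> (\<Sum>z\<in>Pow E. ?F z)"
    using E F_nonneg by (intro member_le_sum) auto
  finally have F_pos: "0 < (\<Sum>z\<in>Pow E. ?F z)" .
  have W_pos: "0 < (\<Sum>z\<in>Pow E. ?W z)"
    unfolding sum_omega_weight[OF E] using fin ne ends_V ends' a b
    by (intro spin_partition_pos) auto
  have "stoch_dom E (\<lambda>w. ?W w / (\<Sum>z\<in>Pow E. ?W z)) (\<lambda>w. ?F w / (\<Sum>z\<in>Pow E. ?F z))"
    using omega_weight_holley[OF E fin(1,2) ne(1) ends a less_imp_le[OF b(1)] b(2)]
    by (intro holley_stoch_dom[OF E] W_nonneg F_nonneg W_pos F_pos)
  then show ?thesis
    unfolding sum_omega_weight[OF E] fk_def .
qed

section \<open>Combinatorial maps\<close>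

lemma orb_subset:
  assumes "\<forall>x\<in>D. f x \<in> D" "d \<in> D"
  shows "orb f d \<subseteq> D"
proof -
  have "(f ^^ n) d \<in> D" for n by (induction n) (use assms in auto)
  then show ?thesis unfolding orb_def by auto
qed

lemma orb_self: "d \<in> orb f d"
  unfolding orb_def by (metis (mono_tags) CollectI funpow_0)

lemma
  assumes "finite D"
  shows finite_cm_verts: "finite (cm_verts D rho)"
    and finite_cm_edges: "finite (cm_edges D alpha)"
    and finite_cm_faces: "finite (cm_faces D alpha rho)"
  using assms unfolding cm_verts_def cm_edges_def cm_faces_def by (simp_all add: setcompr_eq_image)

lemma cm_edge_subset:
  assumes "is_cmap D alpha rho" "e \<in> cm_edges D alpha"
  obtains d where "d \<in> e" "e \<subseteq> D"
proof -
  obtain d where d: "d \<in> D" "e = orb alpha d" using assms(2) unfolding cm_edges_def by blast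
  have "\<forall>x\<in>D. alpha x \<in> D" using assms(1) unfolding is_cmap_def by blast
  then have "e \<subseteq> D" using orb_subset d by simp
  moreover have "d \<in> e" unfolding d(2) by (rule orb_self)
  ultimately show thesis by (rule that[rotated])
qed

lemma cm_ends_subset:
  assumes "is_cmap D alpha rho" "e \<in> cm_edges D alpha"
  shows "cm_ends rho e \<subseteq> cm_verts D rho" "cm_ends rho e \<noteq> {}"
proof -
  obtain d where "d \<in> e" "e \<subseteq> D" by (rule cm_edge_subset[OF assms])
  then show "cm_ends rho e \<subseteq> cm_verts D rho" "cm_ends rho e \<noteq> {}"
    unfolding cm_ends_def cm_verts_def by auto
qed

lemma cm_dends_subset:
  assumes "is_cmap D alpha rho" "e \<in> cm_edges D alpha"
  shows "cm_dends alpha rho e \<subseteq> cm_faces D alpha rho" "cm_dends alpha rho e \<noteq> {}"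
proof -
  obtain d where "d \<in> e" "e \<subseteq> D" by (rule cm_edge_subset[OF assms])
  then show "cm_dends alpha rho e \<subseteq> cm_faces D alpha rho" "cm_dends alpha rho e \<noteq> {}"
    unfolding cm_dends_def cm_faces_def by auto
qed

lemma edge_prob_sum_dual:
  "edge_prob a b X Y e c True + edge_prob a b X Y e c False = primal_marginal b X Y e c"
  unfolding edge_prob_def primal_marginal_def by auto

lemma edge_prob_sum_primal:
  "X \<inter> Y = {} \<Longrightarrow> edge_prob a b X Y e True c + edge_prob a b X Y e False c = primal_marginal a Y X e c"
  unfolding edge_prob_def primal_marginal_def by auto

lemma sum_spin_pairs:
  assumes "finite (cm_verts D rho)" "finite Q" "finite (cm_faces D alpha rho)" "finite Q'"
  shows "(\<Sum>(s, s')\<in>spin_pairs D alpha rho Q Q'. f s s') =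
    (\<Sum>s\<in>cm_verts D rho \<rightarrow>\<^sub>E Q. \<Sum>t\<in>cm_faces D alpha rho \<rightarrow>\<^sub>E Q'.
       if eta_p D alpha rho s \<inter> eta_d D alpha rho t = {} then f s t else 0)"
proof -
  let ?A = "(cm_verts D rho \<rightarrow>\<^sub>E Q) \<times> (cm_faces D alpha rho \<rightarrow>\<^sub>E Q')"
  have "spin_pairs D alpha rho Q Q' = {p \<in> ?A. eta_p D alpha rho (fst p) \<inter> eta_d D alpha rho (snd p) = {}}"
    unfolding spin_pairs_def by auto
  then have "(\<Sum>(s, s')\<in>spin_pairs D alpha rho Q Q'. f s s') =
      (\<Sum>(s, t)\<in>?A. if eta_p D alpha rho s \<inter> eta_d D alpha rho t = {} then f s t else 0)"
    using assms by (simp add: sum.inter_filter[symmetric] finite_PiE case_prod_beta)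
  then show ?thesis by (simp add: sum.cartesian_product)
qed

lemma eta_p_eq_disagree_edges: "eta_p D alpha rho s = disagree_edges (cm_edges D alpha) (cm_ends rho) s"
  unfolding eta_p_def disagree_edges_def ..

lemma eta_d_eq_disagree_edges:
  "eta_d D alpha rho s' = disagree_edges (cm_edges D alpha) (cm_dends alpha rho) s'"
  unfolding eta_d_def disagree_edges_def ..

lemma perc_law_eq:
  assumes "finite (cm_verts D rho)" "finite Q" "finite (cm_faces D alpha rho)" "finite Q'"
  defines "E \<equiv> cm_edges D alpha"
  shows "perc_law D alpha rho Q Q' a b w w' =
    (\<Sum>s\<in>cm_verts D rho \<rightarrow>\<^sub>E Q. \<Sum>t\<in>cm_faces D alpha rho \<rightarrow>\<^sub>E Q'.
       pair_weight E (cm_ends rho) (cm_dends alpha rho) a b s t *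
       (\<Prod>e\<in>E. edge_prob a b (disagree_edges E (cm_ends rho) s) (disagree_edges E (cm_dends alpha rho) t)
          e (e \<in> w) (e \<in> w')))
    / spin_partition E (cm_verts D rho) (cm_ends rho) Q (cm_faces D alpha rho) (cm_dends alpha rho) Q' a b"
  unfolding perc_law_def sum_spin_pairs[OF assms(1-4)] spin_partition_def pair_weight_def spin_weight_def
    eta_p_eq_disagree_edges eta_d_eq_disagree_edges E_def
  by (simp add: if_distrib[of "\<lambda>x. x * _"] cong: if_cong)

lemma omega_law_eq:
  assumes "finite (cm_verts D rho)" "finite Q" "finite (cm_faces D alpha rho)" "finite Q'"
    and E: "finite (cm_edges D alpha)"
  shows "omega_law D alpha rho Q Q' a b w =
    omega_weight (cm_edges D alpha) (cm_verts D rho) (cm_ends rho) Q (cm_faces D alpha rho) (cm_dends alpha rho) Q' a b w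
    / spin_partition (cm_edges D alpha) (cm_verts D rho) (cm_ends rho) Q (cm_faces D alpha rho) (cm_dends alpha rho) Q' a b"
proof -
  have marginal: "(\<Sum>w'\<in>Pow (cm_edges D alpha). \<Prod>e\<in>cm_edges D alpha. edge_prob a b X Y e (e \<in> w) (e \<in> w'))
      = (\<Prod>e\<in>cm_edges D alpha. primal_marginal b X Y e (e \<in> w))" for X Y
    using sum_Pow_prod_bool[OF E, of "\<lambda>e c. edge_prob a b X Y e (e \<in> w) c"]
    by (simp add: edge_prob_sum_dual)
  show ?thesis
    unfolding omega_law_def perc_law_eq[OF assms(1-4)] omega_weight_def
      sum_divide_distrib[symmetric] sum_swap3 sum_distrib_left[symmetric] marginal ..
qed

lemma omega'_law_eq:
  assumes "finite (cm_verts D rho)" "finite Q" "finite (cm_faces D alpha rho)" "finite Q'"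
    and E: "finite (cm_edges D alpha)"
  shows "omega'_law D alpha rho Q Q' a b w' =
    omega_weight (cm_edges D alpha) (cm_faces D alpha rho) (cm_dends alpha rho) Q' (cm_verts D rho) (cm_ends rho) Q b a w'
    / spin_partition (cm_edges D alpha) (cm_faces D alpha rho) (cm_dends alpha rho) Q' (cm_verts D rho) (cm_ends rho) Q b a"
proof -
  let ?E = "cm_edges D alpha"
  let ?X = "disagree_edges ?E (cm_ends rho)" and ?Y = "disagree_edges ?E (cm_dends alpha rho)"
  have marginal: "pair_weight ?E (cm_ends rho) (cm_dends alpha rho) a b s t *
        (\<Sum>w\<in>Pow ?E. \<Prod>e\<in>?E. edge_prob a b (?X s) (?Y t) e (e \<in> w) (e \<in> w'))
      = pair_weight ?E (cm_dends alpha rho) (cm_ends rho) b a t s *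
        (\<Prod>e\<in>?E. primal_marginal a (?Y t) (?X s) e (e \<in> w'))" for s t
  proof (cases "?X s \<inter> ?Y t = {}")
    case True
    then show ?thesis
      using sum_Pow_prod_bool[OF E, of "\<lambda>e c. edge_prob a b (?X s) (?Y t) e c (e \<in> w')"]
      by (simp add: edge_prob_sum_primal pair_weight_swap[of ?E "cm_ends rho"])
  next
    case False
    then show ?thesis by (simp add: pair_weight_def Int_commute)
  qed
  show ?thesis
    unfolding omega'_law_def perc_law_eq[OF assms(1-4)] omega_weight_def
      sum_divide_distrib[symmetric] sum_swap3 sum_distrib_left[symmetric] marginal
      spin_partition_swap[of ?E "cm_verts D rho"]
    by (subst sum.swap) (rule refl)
qed

theorem lemma6p2:
  fixes D :: "'d set" and alpha rho :: "'d \<Rightarrow> 'd"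
    and Q Q' :: "complex set" and q q' :: nat and a b :: real
  assumes "cm_genus0 D alpha rho"
    and "q \<ge> 1" and "q' \<ge> 1"
    and "finite Q" and "finite Q'" and "card Q = q" and "card Q' = q'"
    and "uminus ` Q = Q" and "uminus ` Q' = Q'"
    and "0 < a" and "a \<le> 1" and "0 < b" and "b \<le> 1"
  shows "stoch_dom (cm_edges D alpha) (omega_law D alpha rho Q Q' a b)
           (fk (cm_verts D rho) (cm_edges D alpha) (cm_ends rho) (real q) (1 - b))
       \<and> stoch_dom (cm_edges D alpha) (omega'_law D alpha rho Q Q' a b)
           (fk (cm_faces D alpha rho) (cm_edges D alpha) (cm_dends alpha rho) (real q') (1 - a))"
proof -
  have cmap: "is_cmap D alpha rho" using assms(1) unfolding cm_genus0_def by blast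
  then have "finite D" unfolding is_cmap_def by blast
  note fin = finite_cm_verts[OF this] finite_cm_edges[OF this] finite_cm_faces[OF this]
  have ends: "\<forall>e\<in>cm_edges D alpha. cm_ends rho e \<subseteq> cm_verts D rho \<and> cm_ends rho e \<noteq> {}"
    and dends: "\<forall>e\<in>cm_edges D alpha. cm_dends alpha rho e \<subseteq> cm_faces D alpha rho \<and> cm_dends alpha rho e \<noteq> {}"
    using cm_ends_subset[OF cmap] cm_dends_subset[OF cmap] by blast+
  have ne: "Q \<noteq> {}" "Q' \<noteq> {}" using assms(2,3,6,7) by auto
  have "stoch_dom (cm_edges D alpha) (omega_law D alpha rho Q Q' a b)
      (fk (cm_verts D rho) (cm_edges D alpha) (cm_ends rho) (card Q) (1 - b))"
    unfolding omega_law_eq[OF fin(1) assms(4) fin(3) assms(5) fin(2)]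
    using ends dends assms(10-13) by (intro omega_law_dominates_fk fin assms(4,5) ne) auto
  moreover have "stoch_dom (cm_edges D alpha) (omega'_law D alpha rho Q Q' a b)
      (fk (cm_faces D alpha rho) (cm_edges D alpha) (cm_dends alpha rho) (card Q') (1 - a))"
    unfolding omega'_law_eq[OF fin(1) assms(4) fin(3) assms(5) fin(2)]
    using ends dends assms(10-13) by (intro omega_law_dominates_fk fin assms(4,5) ne) auto
  ultimately show ?thesis using assms(6,7) by simp
qed

end
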